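(* Assume $\mu>0$, $0<\lambda<\infty$, $\tau>0$, and let $\widetilde{\mathbf S'}=\frac1\lambda\mathbf M+\mathbf M(\tau\mathbf M+2\mu\mathbf N)^{-1}\mathbf N$. Then $\widetilde{\mathbf S'}$ is invertible and $$\widetilde{\mathbf S'}^{-1}=\frac{2\mu\lambda}{2\mu+\lambda}\mathbf M^{-1}+\tau\Big(\frac{\lambda}{2\mu+\lambda}\Big)^2\Big(\frac{\tau}{2\mu+\lambda}\mathbf M+\mathbf N\Big)^{-1}.$$
   Context: $\mathcal T_h$ is a conforming simplicial triangulation of a polygonal/polyhedral domain $\Omega\subset\mathbb R^d$ with mesh size $h$ and facet set $\mathcal E_h$; $\overline Q_h$ is the space of piecewise constant functions on $\mathcal T_h$ with a fixed basis, $\overline{\mathbf P}$ denoting the coefficient vector of $\overline p_h$ and $\langle\cdot,\cdot\rangle_2$ the Euclidean product. For $\overline q\in\overline Q_h$, $[\![\overline q]\!]$ is the jump across interior facets and $0$ on boundary facets. $\mathbf M$ and $\mathbf N$ are defined by $\langle\mathbf M\overline{\mathbf P},\overline{\mathbf Q}\rangle_2=(\overline p_h,\overline q_h)_{L^2(\Omega)}$ and $\langle\mathbf N\overline{\mathbf P},\overline{\mathbf Q}\rangle_2=\frac1h\sum_{F\in\mathcal E_h}\langle[\![\overline p_h]\!],[\![\overline q_h]\!]\rangle_{L^2(F)}$ for all $\overline p_h,\overline q_h\in\overline Q_h$. *)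

theory Defs
  imports "HOL-Analysis.Analysis"
begin

text \<open>Abstract data of a conforming simplicial mesh relevant for piecewise constants.
Cells are indexed by the finite type 'n, facets by the finite type 'f.
vol K = |K| (d-dimensional measure of cell K), area F = |F| ((d-1)-dimensional measure),
intF F says F is an interior facet, shared by the two distinct cells c1 F and c2 F.
A piecewise constant function is represented by its vector of cell values (real ^ 'n).
The fixed basis of the piecewise constants is given by an invertible matrix B whose
j-th column is the vector of cell values of the j-th basis function.\<close>

definition pc_l2 :: "('n::finite \<Rightarrow> real) \<Rightarrow> real^'n \<Rightarrow> real^'n \<Rightarrow> real" where
  "pc_l2 vol p q = (\<Sum>K\<in>UNIV. vol K * (p $ K) * (q $ K))"

text \<open>(1/h) times sum over facets of the L2(F) product of jumps; the jump is zero on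
boundary facets, and constant (p_K1 - p_K2) on an interior facet.\<close>
definition pc_jump :: "real \<Rightarrow> ('f::finite \<Rightarrow> bool) \<Rightarrow> ('f \<Rightarrow> 'n::finite) \<Rightarrow> ('f \<Rightarrow> 'n)
    \<Rightarrow> ('f \<Rightarrow> real) \<Rightarrow> real^'n \<Rightarrow> real^'n \<Rightarrow> real" where
  "pc_jump h intF c1 c2 area p q =
     (1 / h) * (\<Sum>F\<in>UNIV. (if intF F
        then area F * (p $ c1 F - p $ c2 F) * (q $ c1 F - q $ c2 F) else 0))"

definition mass_matrix :: "('n::finite \<Rightarrow> real) \<Rightarrow> real^'n^'n \<Rightarrow> real^'n^'n" where
  "mass_matrix vol B = (\<chi> i j. pc_l2 vol (column j B) (column i B))"

definition jump_matrix :: "real \<Rightarrow> ('f::finite \<Rightarrow> bool) \<Rightarrow> ('f \<Rightarrow> 'n::finite) \<Rightarrow> ('f \<Rightarrow> 'n)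
    \<Rightarrow> ('f \<Rightarrow> real) \<Rightarrow> real^'n^'n \<Rightarrow> real^'n^'n" where
  "jump_matrix h intF c1 c2 area B =
     (\<chi> i j. pc_jump h intF c1 c2 area (column j B) (column i B))"

end

theory Submission
  imports Defs
begin

(* With s = 2 mu + lam, P = tau M + 2 mu N and Q = (tau / s) M + N one has (1/lam) P + N = (s/lam) Q,
   so the Schur complement factorises as
     S = (1/lam) M + M P^-1 N = M P^-1 ((1/lam) P + N) = (s/lam) M P^-1 Q,
   whence S^-1 = (lam/s) Q^-1 P M^-1, and substituting P = 2 mu Q + (tau lam / s) M gives the formula.
   M, P and Q are invertible because a M + b N (a > 0, b >= 0) is the Gram matrix, in the basis B,
   of the positive definite form a (p, q)_L2 + b (jump form) on the piecewise constants. *)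

lemma matrix_add_rdistrib: "(A + B) ** C = A ** C + B ** C"
  by (vector matrix_matrix_mult_def sum.distrib[symmetric] field_simps)

lemma matrix_inv_right:
  assumes "invertible A" shows "A ** matrix_inv A = mat 1"
  using someI_ex[OF assms[unfolded invertible_def]] by (simp add: matrix_inv_def)

lemma matrix_inv_left:
  assumes "invertible A" shows "matrix_inv A ** A = mat 1"
  using someI_ex[OF assms[unfolded invertible_def]] by (simp add: matrix_inv_def)

lemma matrix_inv_unique:
  fixes A B :: "'a::field^'n^'n"
  assumes "A ** B = mat 1"
  shows "invertible A" and "matrix_inv A = B"
proof -
  show inv: "invertible A"
    using assms invertible_right_inverse by blast
  have "matrix_inv A = matrix_inv A ** (A ** B)" using assms by simp
  also have "\<dots> = B" by (simp add: matrix_mul_assoc matrix_inv_left[OF inv])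
  finally show "matrix_inv A = B" .
qed

lemma Schur_complement_factorization:
  fixes M N :: "real^'n::finite^'n" and mu lam tau :: real
  defines "s \<equiv> 2 * mu + lam"
  defines "P \<equiv> tau *\<^sub>R M + (2 * mu) *\<^sub>R N" and "Q \<equiv> (tau / s) *\<^sub>R M + N"
  assumes lam: "lam \<noteq> 0" and s: "s \<noteq> 0" and P: "invertible P"
  shows "(1 / lam) *\<^sub>R M + M ** matrix_inv P ** N = (s / lam) *\<^sub>R (M ** matrix_inv P ** Q)"
proof -
  have "(s / lam) * (tau / s) = tau / lam"
    using s by simp
  moreover have "s / lam = 1 + 2 * mu / lam"
    using lam by (simp add: s_def field_simps)
  ultimately have Q_eq: "(1 / lam) *\<^sub>R P + N = (s / lam) *\<^sub>R Q"
    by (simp only: P_def Q_def scaleR_add_right scaleR_add_left scaleR_scaleR) simp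
  have "M ** matrix_inv P ** P = M"
    by (simp add: matrix_mul_assoc[symmetric] matrix_inv_left[OF P])
  then have "(1 / lam) *\<^sub>R M + M ** matrix_inv P ** N = M ** matrix_inv P ** ((1 / lam) *\<^sub>R P + N)"
    by (simp add: matrix_add_ldistrib matrix_scalar_ac scalar_matrix_assoc[symmetric])
  also have "\<dots> = (s / lam) *\<^sub>R (M ** matrix_inv P ** Q)"
    by (simp add: Q_eq matrix_scalar_ac scalar_matrix_assoc)
  finally show ?thesis .
qed

lemma
  fixes M N :: "real^'n::finite^'n" and mu lam tau :: real
  defines "s \<equiv> 2 * mu + lam"
  defines "P \<equiv> tau *\<^sub>R M + (2 * mu) *\<^sub>R N" and "Q \<equiv> (tau / s) *\<^sub>R M + N"
  assumes lam: "lam \<noteq> 0" and s: "s \<noteq> 0"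
    and M: "invertible M" and P: "invertible P" and Q: "invertible Q"
  shows invertible_Schur_complement: "invertible ((1 / lam) *\<^sub>R M + M ** matrix_inv P ** N)"
    and matrix_inv_Schur_complement: "matrix_inv ((1 / lam) *\<^sub>R M + M ** matrix_inv P ** N)
      = (2 * mu * lam / s) *\<^sub>R matrix_inv M + (tau * (lam / s)^2) *\<^sub>R matrix_inv Q"
proof -
  have factor: "(1 / lam) *\<^sub>R M + M ** matrix_inv P ** N = (s / lam) *\<^sub>R (M ** matrix_inv P ** Q)"
    using Schur_complement_factorization[of lam mu tau M N] lam s P by (simp add: s_def P_def Q_def)
  have "(M ** matrix_inv P ** Q) ** (matrix_inv Q ** P ** matrix_inv M)
      = M ** (matrix_inv P ** (Q ** matrix_inv Q) ** P) ** matrix_inv M"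
    by (simp add: matrix_mul_assoc)
  also have "\<dots> = mat 1"
    by (simp add: matrix_inv_right[OF Q] matrix_inv_left[OF P] matrix_inv_right[OF M])
  finally have "((1 / lam) *\<^sub>R M + M ** matrix_inv P ** N) ** ((lam / s) *\<^sub>R (matrix_inv Q ** P ** matrix_inv M))
      = mat 1"
    using lam s by (simp add: factor matrix_scalar_ac scalar_matrix_assoc[symmetric])
  note inverse = matrix_inv_unique[OF this]
  show "invertible ((1 / lam) *\<^sub>R M + M ** matrix_inv P ** N)"
    using inverse(1) .
  have "2 * mu * (tau / s) + tau * lam / s = tau * s / s"
    by (simp add: s_def add_divide_distrib algebra_simps)
  with s have "tau *\<^sub>R M = (2 * mu * (tau / s)) *\<^sub>R M + (tau * lam / s) *\<^sub>R M"
    by (simp flip: scaleR_add_left)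
  then have P_eq: "P = (2 * mu) *\<^sub>R Q + (tau * lam / s) *\<^sub>R M"
    unfolding P_def Q_def scaleR_add_right scaleR_scaleR by (simp add: algebra_simps)
  have "matrix_inv Q ** P ** matrix_inv M
      = (2 * mu) *\<^sub>R (matrix_inv Q ** Q ** matrix_inv M) + (tau * lam / s) *\<^sub>R (matrix_inv Q ** (M ** matrix_inv M))"
    unfolding P_eq
    by (simp add: matrix_add_ldistrib matrix_add_rdistrib matrix_scalar_ac scalar_matrix_assoc[symmetric]
        matrix_mul_assoc)
  also have "\<dots> = (2 * mu) *\<^sub>R matrix_inv M + (tau * lam / s) *\<^sub>R matrix_inv Q"
    by (simp add: matrix_inv_left[OF Q] matrix_inv_right[OF M])
  finally show "matrix_inv ((1 / lam) *\<^sub>R M + M ** matrix_inv P ** N)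
      = (2 * mu * lam / s) *\<^sub>R matrix_inv M + (tau * (lam / s)^2) *\<^sub>R matrix_inv Q"
    by (simp add: inverse(2) scaleR_add_right power2_eq_square mult_ac)
qed

lemma inner_Gram_matrix:
  fixes b :: "real^'n::finite \<Rightarrow> real^'n \<Rightarrow> real" and B :: "real^'m::finite^'n"
  assumes "bilinear b"
  shows "u \<bullet> ((\<chi> i j. b (column j B) (column i B)) *v v) = b (B *v v) (B *v u)"
proof -
  have "b (B *v v) (B *v u) = (\<Sum>(j, i)\<in>UNIV \<times> UNIV. b (v $ j *\<^sub>R column j B) (u $ i *\<^sub>R column i B))"
    unfolding matrix_mult_sum scalar_mult_eq_scaleR by (rule bilinear_sum[OF assms])
  also have "\<dots> = (\<Sum>j\<in>UNIV. \<Sum>i\<in>UNIV. u $ i * (b (column j B) (column i B) * v $ j))"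
    unfolding sum.cartesian_product[symmetric]
    by (simp add: bilinear_lmul[OF assms] bilinear_rmul[OF assms] mult_ac)
  also have "\<dots> = u \<bullet> ((\<chi> i j. b (column j B) (column i B)) *v v)"
    by (subst sum.swap) (simp add: inner_vec_def matrix_vector_mult_def sum_distrib_left)
  finally show ?thesis by simp
qed

lemma bilinear_pc_l2: "bilinear (pc_l2 vol)"
  unfolding bilinear_def pc_l2_def
  by (auto intro!: linearI simp: sum.distrib sum_distrib_left distrib_left distrib_right mult_ac)

lemma pc_jump_eq_weighted_sum:
  "pc_jump h intF c1 c2 area p q
    = (\<Sum>F\<in>UNIV. (if intF F then area F / h else 0) * ((p $ c1 F - p $ c2 F) * (q $ c1 F - q $ c2 F)))"
  unfolding pc_jump_def sum_distrib_left by (rule sum.cong) auto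

lemma bilinear_pc_jump: "bilinear (pc_jump h intF c1 c2 area)"
  unfolding bilinear_def pc_jump_eq_weighted_sum
  by (auto intro!: linearI sum.cong simp: sum_distrib_left sum.distrib[symmetric])
    (simp_all add: algebra_simps add_divide_distrib diff_divide_distrib)

lemma pc_l2_self_pos:
  assumes vol: "\<And>K. vol K > 0" and "p \<noteq> 0"
  shows "pc_l2 vol p p > 0"
proof -
  obtain K where "p $ K \<noteq> 0"
    using assms(2) by (auto simp: vec_eq_iff)
  have "pc_l2 vol p p = (\<Sum>L\<in>UNIV. vol L * (p $ L)\<^sup>2)"
    by (simp add: pc_l2_def power2_eq_square mult.assoc)
  also have "\<dots> > 0"
    by (rule sum_pos2[where i = K])
      (use vol \<open>p $ K \<noteq> 0\<close> in \<open>auto simp: less_imp_le\<close>)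
  finally show ?thesis .
qed

lemma pc_jump_self_nonneg:
  assumes "h \<ge> 0" and "\<And>F. area F \<ge> 0"
  shows "pc_jump h intF c1 c2 area p p \<ge> 0"
  unfolding pc_jump_def using assms
  by (intro mult_nonneg_nonneg sum_nonneg) (auto intro!: mult_nonneg_nonneg simp: mult.assoc)

lemma pos_def_imp_invertible:
  fixes A :: "real^'n::finite^'n"
  assumes "\<And>v. v \<noteq> 0 \<Longrightarrow> v \<bullet> (A *v v) > 0"
  shows "invertible A"
  unfolding invertible_left_inverse matrix_left_invertible_ker using assms by force

lemma invertible_mass_jump_combination:
  fixes B :: "real^'n::finite^'n"
  assumes "h \<ge> 0" and vol: "\<And>K. vol K > 0" and area: "\<And>F. area F \<ge> 0"
    and B: "invertible B" and "a > 0" and "b \<ge> 0"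
  shows "invertible (a *\<^sub>R mass_matrix vol B + b *\<^sub>R jump_matrix h intF c1 c2 area B)"
proof (rule pos_def_imp_invertible)
  fix v :: "real^'n"
  assume "v \<noteq> 0"
  then have Bv: "B *v v \<noteq> 0"
    using inj_matrix_vector_mult[OF B] by (metis injD matrix_vector_mult_0_right)
  have "v \<bullet> (mass_matrix vol B *v v) = pc_l2 vol (B *v v) (B *v v)"
    unfolding mass_matrix_def by (rule inner_Gram_matrix[OF bilinear_pc_l2])
  moreover have "v \<bullet> (jump_matrix h intF c1 c2 area B *v v) = pc_jump h intF c1 c2 area (B *v v) (B *v v)"
    unfolding jump_matrix_def by (rule inner_Gram_matrix[OF bilinear_pc_jump])
  moreover have "v \<bullet> ((a *\<^sub>R mass_matrix vol B + b *\<^sub>R jump_matrix h intF c1 c2 area B) *v v)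
      = a * (v \<bullet> (mass_matrix vol B *v v)) + b * (v \<bullet> (jump_matrix h intF c1 c2 area B *v v))"
    by (simp only: matrix_vector_mult_add_rdistrib scaleR_matrix_vector_assoc[symmetric]
        inner_add_right inner_scaleR_right)
  ultimately have "v \<bullet> ((a *\<^sub>R mass_matrix vol B + b *\<^sub>R jump_matrix h intF c1 c2 area B) *v v)
      = a * pc_l2 vol (B *v v) (B *v v) + b * pc_jump h intF c1 c2 area (B *v v) (B *v v)"
    by (simp only:)
  also have "\<dots> > 0"
    using assms pc_l2_self_pos[OF vol Bv] pc_jump_self_nonneg[of h area intF c1 c2 "B *v v"]
    by (simp add: add_pos_nonneg)
  finally show "v \<bullet> ((a *\<^sub>R mass_matrix vol B + b *\<^sub>R jump_matrix h intF c1 c2 area B) *v v) > 0" .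
qed

theorem theorem3p11:
  fixes vol :: "'n::finite \<Rightarrow> real"
    and area :: "'f::finite \<Rightarrow> real"
    and intF :: "'f \<Rightarrow> bool"
    and c1 c2 :: "'f \<Rightarrow> 'n"
    and B :: "real^'n^'n"
    and h mu lam tau :: real
    and M N :: "real^'n^'n"
  assumes h_pos: "h > 0"
    and vol_pos: "\<And>K. vol K > 0"
    and area_pos: "\<And>F. area F > 0"
    and interior_cells: "\<And>F. intF F \<Longrightarrow> c1 F \<noteq> c2 F"
    and basis: "invertible B"
    and M_def: "M = mass_matrix vol B"
    and N_def: "N = jump_matrix h intF c1 c2 area B"
    and mu_pos: "mu > 0" and lambda_pos: "lam > 0" and tau_pos: "tau > 0"
  shows "invertible ((1 / lam) *\<^sub>R M + M ** matrix_inv (tau *\<^sub>R M + (2 * mu) *\<^sub>R N) ** N)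
    \<and> matrix_inv ((1 / lam) *\<^sub>R M + M ** matrix_inv (tau *\<^sub>R M + (2 * mu) *\<^sub>R N) ** N)
      = (2 * mu * lam / (2 * mu + lam)) *\<^sub>R matrix_inv M
        + (tau * (lam / (2 * mu + lam))^2) *\<^sub>R
            matrix_inv ((tau / (2 * mu + lam)) *\<^sub>R M + N)"
proof -
  have combination: "invertible (a *\<^sub>R M + b *\<^sub>R N)" if "a > 0" "b \<ge> 0" for a b
    unfolding M_def N_def using h_pos vol_pos area_pos basis that
    by (intro invertible_mass_jump_combination) (auto intro: less_imp_le)
  have "invertible M"
    using combination[of 1 0] by simp
  moreover have "invertible (tau *\<^sub>R M + (2 * mu) *\<^sub>R N)"
    using combination tau_pos mu_pos by simp
  moreover have "invertible ((tau / (2 * mu + lam)) *\<^sub>R M + N)"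
    using combination[of "tau / (2 * mu + lam)" 1] tau_pos mu_pos lambda_pos by simp
  moreover have "lam \<noteq> 0" and "2 * mu + lam \<noteq> 0"
    using mu_pos lambda_pos by auto
  ultimately show ?thesis
    by (simp add: invertible_Schur_complement matrix_inv_Schur_complement)
qed
end
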